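(* Let $n,n_1,n_2\in\mathbb{N}^+$ and $p_1,p_2$ satisfy the standing assumptions below, and put $s_2=n/n_2$. Let $G_{l_1+l_2}$ be the two-layer stochastic block model $G(n,n_1,n_2,p_1,p_2)$, and let $G_{l_1+N}$ be the model $G(n,n_1,1,p_1,p_n)$ with $p_n=\frac{s_2-1}{n-1}\,p_2$, i.e. the layer-1 structure (with the same $n_1$ communities and probability $p_1$) plus uniform random noise in which every pair of nodes is additionally joined independently with probability $p_n$ (so that the expected number of noise edges equals the expected number of edges generated by layer 2 in $G_{l_1+l_2}$). Let $Q^{S}_{l_1}$ and $Q^{R}_{l_1}$ denote the (expected) modularity of the ground-truth layer $l_1$ in $G_{l_1+l_2}$ and in $G_{l_1+N}$ respectively. Then $Q^{S}_{l_1}<Q^{R}_{l_1}$.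
   Context: Multi-layer stochastic block model $G(n,n_1,\dots,n_L,p_1,\dots,p_L)$: a random graph on $n$ nodes with $L$ layers. For each layer $l$ the nodes are partitioned into $n_l$ planted communities of size $s_l=n/n_l$; independently for each layer, each pair of distinct nodes in a common community of layer $l$ receives an edge from layer $l$ with probability $p_l$; the graph is the simple union of all generated edges, so a pair of nodes lying in a common community of exactly the layers in a set $T$ is an edge with probability $1-\prod_{l\in T}(1-p_l)$. The partitions of different layers are independent: for any $k\ge 2$ distinct layers $l_1,\dots,l_k$ and any choice of one community from each, the intersection of these communities has $r_{l_1\cdots l_k}=n/(n_{l_1}\cdots n_{l_k})$ nodes (in expectation). Standing assumptions (for the layers of the block model): $n_l\ge 4$, $p_l\in[0.05,1]$, and $n\ge 2\prod_l n_l$. Modularity: for a partition (layer) $l$ of the nodes of a graph with $e$ edges, if community $i$ has $e^i_{ll}$ internal edges, $e^i_{lout}$ edges with exactly one endpoint in it, and total degree $d^i_l=2e^i_{ll}+e^i_{lout}$, then $Q_l=\sum_i\big(\frac{e^i_{ll}}{e}-(\frac{d^i_l}{2e})^2\big)$. In the block model all quantities are replaced by expectations: writing $e_{ll}$, $e_{lout}$ for the expected numbers of internal and outgoing edges of one community of layer $l$ (identical for all communities of the layer), $d_l=2e_{ll}+e_{lout}$ and $e=n_ld_l/2$, the (expected) modularity of layer $l$ is $Q_l=n_l\big[\frac{e_{ll}}{e}-(\frac{d_l}{2e})^2\big]$. *)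

theory Defs
  imports Complex_Main
begin

text \<open>Expected quantities of layer 1 in a two-layer stochastic block model
  G(n, n1, n2, p1, p2). Sizes are real-valued (expectations):
  s1 = n/n1, s2 = n/n2, r12 = n/(n1 n2).\<close>

definition pairs :: "real \<Rightarrow> real" where
  "pairs x = x * (x - 1) / 2"

text \<open>Expected number of internal edges of one layer-1 community: pairs sharing
  also a layer-2 community are edges with probability 1-(1-p1)(1-p2), the other
  pairs of the community with probability p1.\<close>
definition sbm2_e_in :: "real \<Rightarrow> real \<Rightarrow> real \<Rightarrow> real \<Rightarrow> real \<Rightarrow> real" where
  "sbm2_e_in n n1 n2 p1 p2 =
     (let s1 = n / n1; r = n / (n1 * n2) in
        n2 * pairs r * (1 - (1 - p1) * (1 - p2)) + (pairs s1 - n2 * pairs r) * p1)"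

text \<open>Expected number of edges with exactly one endpoint in a layer-1 community
  (only layer 2 can create them).\<close>
definition sbm2_e_out :: "real \<Rightarrow> real \<Rightarrow> real \<Rightarrow> real \<Rightarrow> real \<Rightarrow> real" where
  "sbm2_e_out n n1 n2 p1 p2 =
     (let s2 = n / n2; r = n / (n1 * n2) in n2 * r * (s2 - r) * p2)"

text \<open>Expected modularity Q_l = n_l [e_ll/e - (d_l/(2e))^2] of layer 1,
  with d = 2 e_ll + e_lout and e = n_l d / 2.\<close>
definition sbm2_modularity1 :: "real \<Rightarrow> real \<Rightarrow> real \<Rightarrow> real \<Rightarrow> real \<Rightarrow> real" where
  "sbm2_modularity1 n n1 n2 p1 p2 =
     (let ei = sbm2_e_in n n1 n2 p1 p2; eo = sbm2_e_out n n1 n2 p1 p2;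
          d = 2 * ei + eo; e = n1 * d / 2
      in n1 * (ei / e - (d / (2 * e))\<^sup>2))"

end

theory Submission
  imports Defs
begin

text \<open>The expected modularity of layer 1 is 2 e_in / (2 e_in + e_out) - 1/n1, a decreasing
  function of e_out / e_in. With c = (n - n2)/(n - 1) < 1, the noise model has exactly c times
  the outgoing edges of the two-layer model but more than c times its internal edges: the
  layer-1 contribution is the same in both, while the layer-2 weight r - 1, r = n/(n1 n2),
  becomes (r - 1/n2) c. So the noise model has the smaller ratio e_out / e_in.\<close>

lemma sbm2_modularity1_eq:
  assumes "n1 \<noteq> 0" "2 * sbm2_e_in n n1 n2 p1 p2 + sbm2_e_out n n1 n2 p1 p2 \<noteq> 0"
  shows "sbm2_modularity1 n n1 n2 p1 p2 =
    2 * sbm2_e_in n n1 n2 p1 p2 / (2 * sbm2_e_in n n1 n2 p1 p2 + sbm2_e_out n n1 n2 p1 p2)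
    - 1 / n1"
proof -
  have "n1 * (ei / (n1 * d / 2) - (d / (2 * (n1 * d / 2)))\<^sup>2) = 2 * ei / d - 1 / n1"
    if "d \<noteq> 0" for ei d :: real
    using that assms(1) by (simp add: field_simps power2_eq_square)
  then show ?thesis using assms(2) unfolding sbm2_modularity1_def Let_def by blast
qed

lemma sbm2_e_in_eq:
  assumes "n1 \<noteq> 0" "n2 \<noteq> 0"
  shows "sbm2_e_in n n1 n2 p1 p2 =
    n / n1 / 2 * ((n / n1 - 1) * p1 + (n / (n1 * n2) - 1) * p2 * (1 - p1))"
  using assms unfolding sbm2_e_in_def Let_def pairs_def
  by (simp add: field_simps)

lemma sbm2_e_out_eq: "sbm2_e_out n n1 n2 p1 p2 = n / n1 * (n / n2 - n / (n1 * n2)) * p2"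
  unfolding sbm2_e_out_def Let_def
  by (cases "n2 = 0") (simp_all add: field_simps)

lemma sbm2_e_in_pos:
  fixes n n1 n2 p1 p2 :: real
  assumes "0 < n1" "0 < n2" "n1 * n2 \<le> n" "n1 < n" and "0 < p1" "p1 \<le> 1" "0 \<le> p2"
  shows "0 < sbm2_e_in n n1 n2 p1 p2"
proof -
  have "1 < n / n1" "1 \<le> n / (n1 * n2)"
    using assms(1-4) by (simp_all add: less_divide_eq le_divide_eq)
  then show ?thesis
    using assms(1,2,5-7) by (simp add: sbm2_e_in_eq add_pos_nonneg)
qed

lemma sbm2_e_out_pos:
  fixes n n1 n2 p2 :: real
  assumes "1 < n1" "0 < n2" "0 < n" "0 < p2"
  shows "0 < sbm2_e_out n n1 n2 p1 p2"
proof -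
  have "n / (n1 * n2) < n / n2"
    using assms(1-3) by (simp add: divide_strict_left_mono)
  then show ?thesis using assms by (simp add: sbm2_e_out_eq)
qed

lemma sbm2_modularity1_less:
  fixes n n1 n2 n2' p1 p2 p1' p2' :: real
  defines "ei \<equiv> sbm2_e_in n n1 n2 p1 p2" and "eo \<equiv> sbm2_e_out n n1 n2 p1 p2"
    and "ei' \<equiv> sbm2_e_in n n1 n2' p1' p2'" and "eo' \<equiv> sbm2_e_out n n1 n2' p1' p2'"
  assumes "n1 \<noteq> 0" "0 < ei" "0 < eo" "0 < ei'" "0 < eo'" and "ei * eo' < ei' * eo"
  shows "sbm2_modularity1 n n1 n2 p1 p2 < sbm2_modularity1 n n1 n2' p1' p2'"
proof -
  have "2 * ei * (2 * ei' + eo') < 2 * ei' * (2 * ei + eo)"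
    using assms(10) by (simp add: algebra_simps)
  then have "2 * ei / (2 * ei + eo) < 2 * ei' / (2 * ei' + eo')"
    using assms(6-9) by (simp add: divide_simps)
  then show ?thesis
    using assms(5-9) by (simp add: sbm2_modularity1_eq flip: ei_def eo_def ei'_def eo'_def)
qed

lemma sbm2_e_out_noise:
  fixes n n1 n2 p1 p2 :: real
  assumes "n2 \<noteq> 0"
  shows "sbm2_e_out n n1 1 p1 ((n / n2 - 1) / (n - 1) * p2)
    = (n - n2) / (n - 1) * sbm2_e_out n n1 n2 p1 p2"
proof -
  have "n / n2 - n / (n1 * n2) = (n - n / n1) / n2" "n / n2 - 1 = (n - n2) / n2"
    using assms by (simp_all add: diff_divide_distrib)
  then show ?thesis by (simp add: sbm2_e_out_eq mult_ac)
qed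

lemma sbm2_e_in_noise:
  fixes n n1 n2 p1 p2 :: real
  assumes "1 \<le> n1" "1 < n2" "n1 * n2 \<le> n" and "0 < p1" "p1 \<le> 1" "0 \<le> p2"
  shows "(n - n2) / (n - 1) * sbm2_e_in n n1 n2 p1 p2
    < sbm2_e_in n n1 1 p1 ((n / n2 - 1) / (n - 1) * p2)"
proof -
  define s1 where "s1 = n / n1"
  define r where "r = n / (n1 * n2)"
  define c where "c = (n - n2) / (n - 1)"
  define q where "q = (n / n2 - 1) / (n - 1) * p2"
  have "n2 \<le> n1 * n2" using assms(1,2) by simp
  then have "n2 \<le> n" using assms(3) by linarith
  then have c: "0 \<le> c" "c < 1"
    using assms(2) unfolding c_def by (simp_all add: divide_simps)
  have q_c: "q = p2 * c / n2"
    using assms(2) unfolding q_def c_def by (simp add: field_simps)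
  have in_S: "sbm2_e_in n n1 n2 p1 p2 = s1 / 2 * ((s1 - 1) * p1 + (r - 1) * p2 * (1 - p1))"
    and in_R: "sbm2_e_in n n1 1 p1 q = s1 / 2 * ((s1 - 1) * p1 + (s1 - 1) * q * (1 - p1))"
    using assms(1,2) by (simp_all add: sbm2_e_in_eq s1_def r_def)
  have s1_r: "s1 = n2 * r" unfolding s1_def r_def using assms(2) by (simp add: field_simps)
  have "1 \<le> r" using assms(1-3) unfolding r_def by (simp add: le_divide_eq)
  then have "n2 \<le> n2 * r" using assms(2) by simp
  then have s1: "1 < s1" using s1_r assms(2) by linarith
  have "r - 1 \<le> (s1 - 1) / n2" using s1_r assms(2) by (simp add: field_simps)
  then have "(r - 1) * (p2 * (1 - p1) * c) \<le> (s1 - 1) / n2 * (p2 * (1 - p1) * c)"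
    using assms(5,6) c by (intro mult_right_mono) auto
  then have "(r - 1) * p2 * (1 - p1) * c \<le> (s1 - 1) * q * (1 - p1)"
    unfolding q_c by (simp add: ac_simps)
  moreover have "(s1 - 1) * p1 * c < (s1 - 1) * p1" using s1 assms(4) c by simp
  ultimately have "c * ((s1 - 1) * p1 + (r - 1) * p2 * (1 - p1))
      < (s1 - 1) * p1 + (s1 - 1) * q * (1 - p1)"
    by (simp add: algebra_simps)
  then have "c * sbm2_e_in n n1 n2 p1 p2 < sbm2_e_in n n1 1 p1 q"
    unfolding in_S in_R using s1 by (simp add: mult.left_commute)
  then show ?thesis unfolding c_def q_def .
qed

lemma sbm2_modularity1_less_noise:
  fixes n n1 n2 p1 p2 :: real
  assumes "1 < n1" "1 < n2" "n1 * n2 \<le> n" and "0 < p1" "p1 \<le> 1" "0 < p2"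
  shows "sbm2_modularity1 n n1 n2 p1 p2
       < sbm2_modularity1 n n1 1 p1 ((n / n2 - 1) / (n - 1) * p2)"
proof -
  define c where "c = (n - n2) / (n - 1)"
  define q where "q = (n / n2 - 1) / (n - 1) * p2"
  have "n1 < n1 * n2" "n2 < n1 * n2" using assms(1,2) by simp_all
  then have "n1 < n" "n2 < n" using assms(3) by linarith+
  then have "0 < q" using assms(2,6) unfolding q_def by (simp add: divide_simps)
  have eo_pos: "0 < sbm2_e_out n n1 n2 p1 p2"
    using assms(1,2,6) \<open>n2 < n\<close> by (intro sbm2_e_out_pos) auto
  have "sbm2_e_out n n1 1 p1 q = c * sbm2_e_out n n1 n2 p1 p2"
    unfolding c_def q_def using assms(2) by (intro sbm2_e_out_noise) simp
  then have "sbm2_e_in n n1 n2 p1 p2 * sbm2_e_out n n1 1 p1 q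
      = c * sbm2_e_in n n1 n2 p1 p2 * sbm2_e_out n n1 n2 p1 p2"
    by simp
  also have "\<dots> < sbm2_e_in n n1 1 p1 q * sbm2_e_out n n1 n2 p1 p2"
  proof (rule mult_strict_right_mono[OF _ eo_pos])
    show "c * sbm2_e_in n n1 n2 p1 p2 < sbm2_e_in n n1 1 p1 q"
      unfolding c_def q_def using assms by (intro sbm2_e_in_noise) auto
  qed
  finally have cross: "sbm2_e_in n n1 n2 p1 p2 * sbm2_e_out n n1 1 p1 q
      < sbm2_e_in n n1 1 p1 q * sbm2_e_out n n1 n2 p1 p2" .
  show ?thesis
    unfolding q_def[symmetric]
  proof (rule sbm2_modularity1_less[OF _ _ eo_pos _ _ cross])
    show "0 < sbm2_e_in n n1 n2 p1 p2" "0 < sbm2_e_in n n1 1 p1 q"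
      using assms \<open>n1 < n\<close> \<open>0 < q\<close> by (intro sbm2_e_in_pos; simp)+
    show "0 < sbm2_e_out n n1 1 p1 q"
      using assms(1) \<open>n1 < n\<close> \<open>0 < q\<close> by (intro sbm2_e_out_pos) auto
  qed (use assms(1) in simp)
qed

theorem theorem8:
  fixes n n1 n2 :: nat and p1 p2 :: real
  assumes "n > 0" "n1 \<ge> 4" "n2 \<ge> 4"
    and "0.05 \<le> p1" "p1 \<le> 1" "0.05 \<le> p2" "p2 \<le> 1"
    and "n \<ge> 2 * n1 * n2"
  shows "sbm2_modularity1 (real n) (real n1) (real n2) p1 p2
       < sbm2_modularity1 (real n) (real n1) 1 p1
           ((real n / real n2 - 1) / (real n - 1) * p2)"
proof (rule sbm2_modularity1_less_noise)
  have "n1 * n2 \<le> n" using assms(8) by simp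
  then show "real n1 * real n2 \<le> real n" by (metis of_nat_mono of_nat_mult)
qed (use assms in auto)

end
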